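(* Let $\ell\in\{\ell_{lin},\ell_{log}\}$ and let $L_f$ be the strong smoothness constant of $f$ defined below. (i) If $\beta^*$ is an $\alpha$-stationary point of (SCL) for some $\alpha>0$, then $\beta^*$ is a local minimizer of (SCL); if moreover $\|\beta_1^*\|_0<s_1$ and $\|\beta_2^*\|_0<s_2$, then $\beta^*$ is a global minimizer of (SCL). (ii) Conversely, if $\beta^*$ is a global minimizer of (SCL), then $\beta^*$ is an $\alpha$-stationary point of (SCL) for every $0<\alpha<1/L_f$.
   Context: Data: $X\in\mathbb{R}^{n\times p_1}$, $Z\in\mathbb{R}^{n\times p_2}$ with rows $x_i,z_i$; $y\in\mathbb{R}^n$ ($y\in\{0,1\}^n$ for $\ell_{log}$); $a,b,c>0$; integers $1\le s_j\le p_j$. Losses $\ell_{lin}(\beta;X,y)=\frac12\sum_i(y_i-\langle x_i,\beta\rangle)^2$, $\ell_{log}(\beta;X,y)=\sum_i(\log(1+\exp\langle x_i,\beta\rangle)-y_i\langle x_i,\beta\rangle)$. Objective $f(\beta)=\frac1n[a\ell(\beta_1;X,y)+b\ell(\beta_2;Z,y)+\frac c2\|X\beta_1-Z\beta_2\|^2]$, $\beta=(\beta_1;\beta_2)$. (SCL): minimize $f$ subject to $\|\beta_1\|_0\le s_1,\|\beta_2\|_0\le s_2$; $\Sigma_j=\{v\in\mathbb{R}^{p_j}:\|v\|_0\le s_j\}$. Local minimizer: feasible point minimizing $f$ over feasible points in a neighborhood. $\Pi_{\Sigma_j}(w)=\arg\min_{u\in\Sigma_j}\|w-u\|$ (set-valued).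 $\beta^*$ is $\alpha$-stationary if $\beta_j^*\in\Pi_{\Sigma_j}(\beta_j^*-\alpha\nabla_jf(\beta^* ))$, $j=1,2$, where $\nabla_j f$ is the gradient in $\beta_j$. Constant $L_f$: for $\ell_{log}$, $L_f=\lambda_{\max}\big(\frac1n\begin{bmatrix}(a/4+c)X^\top X&-cX^\top Z\\-cZ^\top X&(b/4+c)Z^\top Z\end{bmatrix}\big)$; for $\ell_{lin}$, $L_f=\lambda_{\max}\big(\frac1n\begin{bmatrix}(a+c)X^\top X&-cX^\top Z\\-cZ^\top X&(b+c)Z^\top Z\end{bmatrix}\big)$. *)

theory Defs
  imports "HOL-Analysis.Analysis"
begin

datatype loss = Lin | Log

definition l0norm :: "real^'p \<Rightarrow> nat" where
  "l0norm v = card {i. v $ i \<noteq> 0}"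

definition sparse_set :: "nat \<Rightarrow> (real^'p) set" where
  "sparse_set s = {v. l0norm v \<le> s}"

definition proj_sparse :: "nat \<Rightarrow> real^'p \<Rightarrow> (real^'p) set" where
  "proj_sparse s w = {u \<in> sparse_set s. \<forall>v \<in> sparse_set s. dist w u \<le> dist w v}"

definition loss_fun :: "loss \<Rightarrow> real^'p \<Rightarrow> real^'p^'n \<Rightarrow> real^'n \<Rightarrow> real" where
  "loss_fun l \<beta> X y = (case l of
      Lin \<Rightarrow> (1/2) * (\<Sum>i\<in>UNIV. (y $ i - (X *v \<beta>) $ i)^2)
    | Log \<Rightarrow> (\<Sum>i\<in>UNIV. ln (1 + exp ((X *v \<beta>) $ i)) - y $ i * (X *v \<beta>) $ i))"

definition obj :: "loss \<Rightarrow> real \<Rightarrow> real \<Rightarrow> real \<Rightarrow> real^'p1^'n \<Rightarrow> real^'p2^'n \<Rightarrow> real^'n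
    \<Rightarrow> (real^'p1) \<times> (real^'p2) \<Rightarrow> real" where
  "obj l a b c X Z y \<beta> = (1 / real CARD('n)) *
     (a * loss_fun l (fst \<beta>) X y + b * loss_fun l (snd \<beta>) Z y
      + (c/2) * (norm (X *v fst \<beta> - Z *v snd \<beta>))^2)"

definition feasible :: "nat \<Rightarrow> nat \<Rightarrow> (real^'p1) \<times> (real^'p2) \<Rightarrow> bool" where
  "feasible s1 s2 \<beta> \<longleftrightarrow> fst \<beta> \<in> sparse_set s1 \<and> snd \<beta> \<in> sparse_set s2"

definition local_min :: "((real^'p1) \<times> (real^'p2) \<Rightarrow> real) \<Rightarrow> nat \<Rightarrow> nat \<Rightarrow> (real^'p1) \<times> (real^'p2) \<Rightarrow> bool" where
  "local_min f s1 s2 \<beta> \<longleftrightarrow> feasible s1 s2 \<beta> \<and>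
     (\<exists>e>0. \<forall>\<gamma>. feasible s1 s2 \<gamma> \<and> dist \<gamma> \<beta> < e \<longrightarrow> f \<beta> \<le> f \<gamma>)"

definition global_min :: "((real^'p1) \<times> (real^'p2) \<Rightarrow> real) \<Rightarrow> nat \<Rightarrow> nat \<Rightarrow> (real^'p1) \<times> (real^'p2) \<Rightarrow> bool" where
  "global_min f s1 s2 \<beta> \<longleftrightarrow> feasible s1 s2 \<beta> \<and>
     (\<forall>\<gamma>. feasible s1 s2 \<gamma> \<longrightarrow> f \<beta> \<le> f \<gamma>)"

definition grad1 :: "((real^'p1) \<times> (real^'p2) \<Rightarrow> real) \<Rightarrow> (real^'p1) \<times> (real^'p2) \<Rightarrow> real^'p1" where
  "grad1 f \<beta> = (THE g. GDERIV (\<lambda>u. f (u, snd \<beta>)) (fst \<beta>) :> g)"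

definition grad2 :: "((real^'p1) \<times> (real^'p2) \<Rightarrow> real) \<Rightarrow> (real^'p1) \<times> (real^'p2) \<Rightarrow> real^'p2" where
  "grad2 f \<beta> = (THE g. GDERIV (\<lambda>u. f (fst \<beta>, u)) (snd \<beta>) :> g)"

definition alpha_stationary :: "((real^'p1) \<times> (real^'p2) \<Rightarrow> real) \<Rightarrow> nat \<Rightarrow> nat \<Rightarrow> real
    \<Rightarrow> (real^'p1) \<times> (real^'p2) \<Rightarrow> bool" where
  "alpha_stationary f s1 s2 \<alpha> \<beta> \<longleftrightarrow>
     fst \<beta> \<in> proj_sparse s1 (fst \<beta> - \<alpha> *\<^sub>R grad1 f \<beta>) \<and>
     snd \<beta> \<in> proj_sparse s2 (snd \<beta> - \<alpha> *\<^sub>R grad2 f \<beta>)"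

definition Lmat :: "loss \<Rightarrow> real \<Rightarrow> real \<Rightarrow> real \<Rightarrow> real^'p1^'n \<Rightarrow> real^'p2^'n
    \<Rightarrow> real^('p1 + 'p2)^('p1 + 'p2)" where
  "Lmat l a b c X Z = (let ca = (case l of Lin \<Rightarrow> a | Log \<Rightarrow> a/4);
                           cb = (case l of Lin \<Rightarrow> b | Log \<Rightarrow> b/4);
                           XX = transpose X ** X; XZ = transpose X ** Z;
                           ZX = transpose Z ** X; ZZ = transpose Z ** Z in
     (\<chi> i j. (1 / real CARD('n)) *
        (case i of
           Inl i1 \<Rightarrow> (case j of Inl j1 \<Rightarrow> (ca + c) * XX $ i1 $ j1 | Inr j2 \<Rightarrow> - c * XZ $ i1 $ j2)
         | Inr i2 \<Rightarrow> (case j of Inl j1 \<Rightarrow> - c * ZX $ i2 $ j1 | Inr j2 \<Rightarrow> (cb + c) * ZZ $ i2 $ j2))))"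

definition lambda_max :: "real^'m^'m \<Rightarrow> real" where
  "lambda_max M = Max {\<mu>. \<exists>v. v \<noteq> 0 \<and> M *v v = \<mu> *\<^sub>R v}"

definition Lf :: "loss \<Rightarrow> real \<Rightarrow> real \<Rightarrow> real \<Rightarrow> real^'p1^'n \<Rightarrow> real^'p2^'n \<Rightarrow> real" where
  "Lf l a b c X Z = lambda_max (Lmat l a b c X Z :: real^('p1 + 'p2)^('p1 + 'p2))"

end

theory Submission
  imports Defs "HOL-Probability.Hoeffding"
begin

text \<open>Both losses are sandwiched between their tangent line and the tangent line plus
  \<open>\<kappa>/2 (s - t)\<^sup>2\<close>, with \<open>\<kappa> = 1\<close> for least squares and \<open>\<kappa> = 1/4\<close> for the logistic loss
  (Hoeffding's lemma). Hence \<open>f\<close> is convex and satisfies a descent lemma in each block with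
  constant \<open>L\<^sub>f\<close>, because \<open>L\<^sub>f\<close> bounds the quadratic form of the symmetric block matrix.

  (i) A sparse projection fixed point \<open>\<beta>\<^sub>j \<in> \<Pi>(\<beta>\<^sub>j - \<alpha> \<nabla>\<^sub>jf)\<close> has \<open>\<nabla>\<^sub>jf = 0\<close> on the support of
  \<open>\<beta>\<^sub>j\<close>, and everywhere if that support has fewer than \<open>s\<^sub>j\<close> elements. Feasible points close to
  \<open>\<beta>\<close> contain its support, so either the gradient vanishes or they have the same support; in
  both cases the gradient is orthogonal to the displacement, and convexity gives \<open>f(\<beta>) \<le> f(\<gamma>)\<close>.

  (ii) At a global minimiser the descent lemma gives
  \<open>0 \<le> \<langle>\<nabla>\<^sub>jf, w - \<beta>\<^sub>j\<rangle> + L\<^sub>f/2 \<parallel>w - \<beta>\<^sub>j\<parallel>\<^sup>2\<close> for every sparse \<open>w\<close>; for \<open>\<alpha> L\<^sub>f < 1\<close> this says that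
  \<open>\<beta>\<^sub>j\<close> is a nearest sparse vector to \<open>\<beta>\<^sub>j - \<alpha> \<nabla>\<^sub>jf\<close>.\<close>

section \<open>The scalar losses\<close>

definition scalar_loss :: "loss \<Rightarrow> real \<Rightarrow> real \<Rightarrow> real" where
  "scalar_loss l yi t = (case l of Lin \<Rightarrow> (1/2) * (yi - t)^2 | Log \<Rightarrow> ln (1 + exp t) - yi * t)"

definition scalar_loss_deriv :: "loss \<Rightarrow> real \<Rightarrow> real \<Rightarrow> real" where
  "scalar_loss_deriv l yi t = (case l of Lin \<Rightarrow> t - yi | Log \<Rightarrow> exp t / (1 + exp t) - yi)"

definition curvature :: "loss \<Rightarrow> real" where
  "curvature l = (case l of Lin \<Rightarrow> 1 | Log \<Rightarrow> 1/4)"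

lemma curvature_nonneg: "0 \<le> curvature l"
  by (cases l) (simp_all add: curvature_def)

lemma loss_fun_eq_sum_scalar_loss:
  "loss_fun l \<beta> X y = (\<Sum>i\<in>UNIV. scalar_loss l (y$i) ((X *v \<beta>)$i))"
  by (cases l) (simp_all add: loss_fun_def scalar_loss_def sum_distrib_left)

lemma ln_one_plus_exp_add:
  fixes t x :: real
  shows "ln (1 + exp (t + x)) = ln (1 + exp t) + ln (1 + exp t / (1 + exp t) * (exp x - 1))"
proof -
  have pos: "0 < 1 + exp t" by (simp add: add_pos_pos)
  have e: "1 + exp (t + x) = (1 + exp t) * (1 + exp t / (1 + exp t) * (exp x - 1))"
    using pos by (simp add: field_simps exp_add)
  have "0 < 1 + exp t / (1 + exp t) * (exp x - 1)"
    using e pos by (metis exp_gt_zero zero_less_mult_pos add_pos_pos zero_less_one)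
  then show ?thesis
    using e pos by (simp add: ln_mult)
qed

lemma logistic_strict_bounds: "0 < exp t / (1 + exp t)" "exp t / (1 + exp t) < (1::real)"
  by (simp_all add: add_pos_pos)

text \<open>\<open>ln (1 + p (exp x - 1))\<close> is the cumulant generating function of a Bernoulli(\<open>p\<close>)
  variable; it arises as \<open>ln (1 + exp (t + x)) - ln (1 + exp t)\<close> with \<open>p = exp t / (1 + exp t)\<close>.\<close>

lemma ln_mix_exp_ge:
  fixes p x :: real
  assumes "0 < p" "p < 1"
  shows "p * x \<le> ln (1 + p * (exp x - 1))"
proof -
  have "exp ((1 - p) *\<^sub>R 0 + p *\<^sub>R x) \<le> (1 - p) * exp 0 + p * exp x"
    using convex_onD[OF exp_convex, of p 0 x] assms by simp
  then have "exp (p * x) \<le> 1 + p * (exp x - 1)"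
    by (simp add: algebra_simps)
  then show ?thesis
    by (metis exp_gt_zero exp_le_cancel_iff exp_ln less_le_trans)
qed

lemma ln_mix_exp_le:
  fixes p x :: real
  assumes "0 < p" "p < 1"
  shows "ln (1 + p * (exp x - 1)) \<le> p * x + x^2 / 8"
proof (cases "x \<ge> 0")
  case True
  then show ?thesis
    using Hoeffdings_lemma_aux[OF True, of p] assms by (simp add: field_simps)
next
  case False
  have mirror: "1 + p * (exp x - 1) = exp x * (1 + (1 - p) * (exp (-x) - 1))"
    by (simp add: algebra_simps exp_minus_inverse)
  have "1 + (1 - p) * (exp (-x) - 1) = p + (1 - p) * exp (-x)"
    by (simp add: algebra_simps)
  then have "0 < 1 + (1 - p) * (exp (-x) - 1)"
    using assms by (simp add: add_pos_nonneg)
  then have "ln (1 + p * (exp x - 1)) = x + ln (1 + (1 - p) * (exp (-x) - 1))"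
    unfolding mirror by (simp add: ln_mult)
  moreover have "ln (1 + (1 - p) * (exp (-x) - 1)) \<le> (1 - p) * (-x) + x^2 / 8"
    using Hoeffdings_lemma_aux[of "-x" "1 - p"] False assms by (simp add: algebra_simps)
  ultimately show ?thesis
    by (simp add: algebra_simps)
qed

lemma scalar_loss_tangent_le:
  "scalar_loss l yi t + scalar_loss_deriv l yi t * (s - t) \<le> scalar_loss l yi s"
proof (cases l)
  case Lin
  have "0 \<le> (s - t)^2" by simp
  then show ?thesis
    using Lin by (simp add: scalar_loss_def scalar_loss_deriv_def power2_eq_square algebra_simps)
next
  case Log
  then show ?thesis
    using ln_one_plus_exp_add[of t "s - t"] ln_mix_exp_ge[OF logistic_strict_bounds, of t "s - t"]
    by (simp add: scalar_loss_def scalar_loss_deriv_def algebra_simps)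
qed

lemma scalar_loss_le_tangent_quadratic:
  "scalar_loss l yi s
     \<le> scalar_loss l yi t + scalar_loss_deriv l yi t * (s - t) + curvature l / 2 * (s - t)^2"
proof (cases l)
  case Lin
  then show ?thesis
    by (simp add: scalar_loss_def scalar_loss_deriv_def curvature_def power2_eq_square algebra_simps)
next
  case Log
  then show ?thesis
    using ln_one_plus_exp_add[of t "s - t"] ln_mix_exp_le[OF logistic_strict_bounds, of t "s - t"]
    by (simp add: scalar_loss_def scalar_loss_deriv_def curvature_def algebra_simps)
qed

lemma sum_scalar_loss_tangent_le:
  fixes y t t' :: "real^'n"
  shows "(\<Sum>i\<in>UNIV. scalar_loss l (y$i) (t$i)) + (\<chi> i. scalar_loss_deriv l (y$i) (t$i)) \<bullet> (t' - t)
          \<le> (\<Sum>i\<in>UNIV. scalar_loss l (y$i) (t'$i))"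
proof -
  have "(\<Sum>i\<in>UNIV. scalar_loss l (y$i) (t$i)) + (\<chi> i. scalar_loss_deriv l (y$i) (t$i)) \<bullet> (t' - t)
      = (\<Sum>i\<in>UNIV. scalar_loss l (y$i) (t$i) + scalar_loss_deriv l (y$i) (t$i) * (t'$i - t$i))"
    by (simp add: inner_vec_def sum.distrib)
  also have "\<dots> \<le> (\<Sum>i\<in>UNIV. scalar_loss l (y$i) (t'$i))"
    by (intro sum_mono scalar_loss_tangent_le)
  finally show ?thesis .
qed

lemma sum_scalar_loss_le_tangent_quadratic:
  fixes y t t' :: "real^'n"
  shows "(\<Sum>i\<in>UNIV. scalar_loss l (y$i) (t'$i)) \<le> (\<Sum>i\<in>UNIV. scalar_loss l (y$i) (t$i))
     + (\<chi> i. scalar_loss_deriv l (y$i) (t$i)) \<bullet> (t' - t) + curvature l / 2 * ((t' - t) \<bullet> (t' - t))"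
proof -
  have "(\<Sum>i\<in>UNIV. scalar_loss l (y$i) (t'$i)) \<le> (\<Sum>i\<in>UNIV. scalar_loss l (y$i) (t$i)
      + scalar_loss_deriv l (y$i) (t$i) * (t'$i - t$i) + curvature l / 2 * (t'$i - t$i)^2)"
    by (intro sum_mono scalar_loss_le_tangent_quadratic)
  also have "\<dots> = (\<Sum>i\<in>UNIV. scalar_loss l (y$i) (t$i))
     + (\<chi> i. scalar_loss_deriv l (y$i) (t$i)) \<bullet> (t' - t) + curvature l / 2 * ((t' - t) \<bullet> (t' - t))"
    by (simp add: inner_vec_def sum.distrib sum_distrib_left power2_eq_square)
  finally show ?thesis .
qed

section \<open>The objective as a function of the predictions\<close>

definition fit :: "loss \<Rightarrow> real \<Rightarrow> real \<Rightarrow> real \<Rightarrow> real^'n \<Rightarrow> real^'n \<Rightarrow> real^'n \<Rightarrow> real" where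
  "fit l a b c y t s = (1 / real CARD('n)) *
     (a * (\<Sum>i\<in>UNIV. scalar_loss l (y$i) (t$i)) + b * (\<Sum>i\<in>UNIV. scalar_loss l (y$i) (s$i))
      + c / 2 * ((t - s) \<bullet> (t - s)))"

definition fit_grad :: "loss \<Rightarrow> real \<Rightarrow> real \<Rightarrow> real^'n \<Rightarrow> real^'n \<Rightarrow> real^'n \<Rightarrow> real^'n" where
  "fit_grad l a c y t s =
     (1 / real CARD('n)) *\<^sub>R (a *\<^sub>R (\<chi> i. scalar_loss_deriv l (y$i) (t$i)) + c *\<^sub>R (t - s))"

lemma fit_swap: "fit l a b c y t s = fit l b a c y s t"
  by (simp add: fit_def algebra_simps inner_commute inner_diff_left inner_diff_right)

lemma inner_fit_grad:
  fixes y t s d :: "real^'n"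
  shows "fit_grad l a c y t s \<bullet> d = (1 / real CARD('n)) *
     (a * ((\<chi> i. scalar_loss_deriv l (y$i) (t$i)) \<bullet> d) + c * ((t - s) \<bullet> d))"
  by (simp add: fit_grad_def inner_add_left)

lemma fit_tangent_le:
  fixes y t s t' s' :: "real^'n"
  assumes "0 \<le> a" "0 \<le> b" "0 \<le> c"
  shows "fit l a b c y t s + fit_grad l a c y t s \<bullet> (t' - t) + fit_grad l b c y s t \<bullet> (s' - s)
           \<le> fit l a b c y t' s'"
proof -
  define St St' Ss Ss' P Q where
    "St = (\<Sum>i\<in>UNIV. scalar_loss l (y$i) (t$i))" and "St' = (\<Sum>i\<in>UNIV. scalar_loss l (y$i) (t'$i))"
    and "Ss = (\<Sum>i\<in>UNIV. scalar_loss l (y$i) (s$i))" and "Ss' = (\<Sum>i\<in>UNIV. scalar_loss l (y$i) (s'$i))"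
    and "P = (\<chi> i. scalar_loss_deriv l (y$i) (t$i))" and "Q = (\<chi> i. scalar_loss_deriv l (y$i) (s$i))"
  have "a * St + a * (P \<bullet> (t' - t)) \<le> a * St'"
    using mult_left_mono[OF sum_scalar_loss_tangent_le \<open>0 \<le> a\<close>]
    by (simp add: St_def St'_def P_def distrib_left)
  moreover have "b * Ss + b * (Q \<bullet> (s' - s)) \<le> b * Ss'"
    using mult_left_mono[OF sum_scalar_loss_tangent_le \<open>0 \<le> b\<close>]
    by (simp add: Ss_def Ss'_def Q_def distrib_left)
  moreover have "c/2 * ((t - s) \<bullet> (t - s)) + c * ((t - s) \<bullet> (t' - t)) + c * ((s - t) \<bullet> (s' - s))
      \<le> c/2 * ((t' - s') \<bullet> (t' - s'))"
  proof -
    have "0 \<le> c/2 * (((t' - s') - (t - s)) \<bullet> ((t' - s') - (t - s)))"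
      using \<open>0 \<le> c\<close> by simp
    then show ?thesis
      by (simp add: inner_diff_left inner_diff_right inner_commute algebra_simps)
  qed
  ultimately have "(a * St + b * Ss + c/2 * ((t - s) \<bullet> (t - s)))
      + (a * (P \<bullet> (t' - t)) + c * ((t - s) \<bullet> (t' - t))) + (b * (Q \<bullet> (s' - s)) + c * ((s - t) \<bullet> (s' - s)))
      \<le> a * St' + b * Ss' + c/2 * ((t' - s') \<bullet> (t' - s'))"
    by linarith
  then have "(1 / real CARD('n)) * ((a * St + b * Ss + c/2 * ((t - s) \<bullet> (t - s)))
      + (a * (P \<bullet> (t' - t)) + c * ((t - s) \<bullet> (t' - t))) + (b * (Q \<bullet> (s' - s)) + c * ((s - t) \<bullet> (s' - s))))
      \<le> (1 / real CARD('n)) * (a * St' + b * Ss' + c/2 * ((t' - s') \<bullet> (t' - s')))"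
    by (rule mult_left_mono) simp
  then show ?thesis
    unfolding fit_def inner_fit_grad St_def[symmetric] St'_def[symmetric] Ss_def[symmetric]
      Ss'_def[symmetric] P_def[symmetric] Q_def[symmetric]
    by (simp only: distrib_left)
qed

lemma fit_le_tangent_quadratic:
  fixes y t s e :: "real^'n"
  assumes "0 \<le> a"
  shows "fit l a b c y (t + e) s \<le> fit l a b c y t s + fit_grad l a c y t s \<bullet> e
           + (1 / real CARD('n)) * ((a * curvature l + c) / 2 * (e \<bullet> e))"
proof -
  define St St' Ss P where
    "St = (\<Sum>i\<in>UNIV. scalar_loss l (y$i) (t$i))" and "St' = (\<Sum>i\<in>UNIV. scalar_loss l (y$i) ((t + e)$i))"
    and "Ss = (\<Sum>i\<in>UNIV. scalar_loss l (y$i) (s$i))" and "P = (\<chi> i. scalar_loss_deriv l (y$i) (t$i))"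
  have "a * St' \<le> a * St + a * (P \<bullet> e) + a * curvature l / 2 * (e \<bullet> e)"
    using mult_left_mono[OF sum_scalar_loss_le_tangent_quadratic[of l y "t + e" t] \<open>0 \<le> a\<close>]
    by (simp add: St_def St'_def P_def distrib_left)
  moreover have "c/2 * ((t + e - s) \<bullet> (t + e - s))
      = c/2 * ((t - s) \<bullet> (t - s)) + c * ((t - s) \<bullet> e) + c/2 * (e \<bullet> e)"
    by (simp add: inner_diff_left inner_diff_right inner_add_left inner_add_right inner_commute
        algebra_simps)
  moreover have "(a * curvature l + c) / 2 * (e \<bullet> e) = a * curvature l / 2 * (e \<bullet> e) + c/2 * (e \<bullet> e)"
    by (simp add: field_simps)
  ultimately have "a * St' + b * Ss + c/2 * ((t + e - s) \<bullet> (t + e - s))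
      \<le> (a * St + b * Ss + c/2 * ((t - s) \<bullet> (t - s))) + (a * (P \<bullet> e) + c * ((t - s) \<bullet> e))
         + (a * curvature l + c) / 2 * (e \<bullet> e)"
    by linarith
  then have "(1 / real CARD('n)) * (a * St' + b * Ss + c/2 * ((t + e - s) \<bullet> (t + e - s)))
      \<le> (1 / real CARD('n)) * ((a * St + b * Ss + c/2 * ((t - s) \<bullet> (t - s)))
         + (a * (P \<bullet> e) + c * ((t - s) \<bullet> e)) + (a * curvature l + c) / 2 * (e \<bullet> e))"
    by (rule mult_left_mono) simp
  then show ?thesis
    unfolding fit_def inner_fit_grad St_def[symmetric] St'_def[symmetric] Ss_def[symmetric]
      P_def[symmetric]
    by (simp only: distrib_left)
qed

lemma obj_eq_fit: "obj l a b c X Z y (u, v) = fit l a b c y (X *v u) (Z *v v)"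
  by (simp add: obj_def fit_def loss_fun_eq_sum_scalar_loss dot_square_norm)

lemma obj_swap: "obj l a b c X Z y (u, v) = obj l b a c Z X y (v, u)"
  by (simp add: obj_eq_fit fit_swap)

lemma obj_tangent_le:
  assumes "0 \<le> a" "0 \<le> b" "0 \<le> c"
  shows "obj l a b c X Z y (u, v)
      + (transpose X *v fit_grad l a c y (X *v u) (Z *v v)) \<bullet> (u' - u)
      + (transpose Z *v fit_grad l b c y (Z *v v) (X *v u)) \<bullet> (v' - v)
    \<le> obj l a b c X Z y (u', v')"
  using fit_tangent_le[OF assms, of l y "X *v u" "Z *v v" "X *v u'" "Z *v v'"]
  by (simp add: obj_eq_fit dot_lmul_matrix matrix_vector_mult_diff_distrib)

lemma obj_le_tangent_quadratic:
  fixes X :: "real^'p1^'n" and Z :: "real^'p2^'n"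
  assumes "0 \<le> a"
  shows "obj l a b c X Z y (u + d, v) \<le> obj l a b c X Z y (u, v)
      + (transpose X *v fit_grad l a c y (X *v u) (Z *v v)) \<bullet> d
      + (1 / real CARD('n)) * ((a * curvature l + c) / 2 * ((X *v d) \<bullet> (X *v d)))"
  using fit_le_tangent_quadratic[OF assms, of l b c y "X *v u" "X *v d" "Z *v v"]
  by (simp add: obj_eq_fit dot_lmul_matrix matrix_vector_right_distrib)

lemma has_gradient_of_quadratic_sandwich:
  fixes \<phi> :: "'a::real_inner \<Rightarrow> real"
  assumes lower: "\<And>d. \<phi> x + d \<bullet> G \<le> \<phi> (x + d)"
    and upper: "\<And>d. \<phi> (x + d) \<le> \<phi> x + d \<bullet> G + K * (norm d)^2"
    and "0 \<le> K"
  shows "GDERIV \<phi> x :> G"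
  unfolding gderiv_def has_derivative_at'
proof (intro conjI allI impI)
  show "bounded_linear (\<lambda>h. h \<bullet> G)"
    by (rule bounded_linear_inner_left)
  fix e :: real
  assume "0 < e"
  show "\<exists>r>0. \<forall>x'. 0 < norm (x' - x) \<and> norm (x' - x) < r \<longrightarrow>
      norm (\<phi> x' - \<phi> x - (x' - x) \<bullet> G) / norm (x' - x) < e"
  proof (intro exI[of _ "e / (K + 1)"] conjI allI impI)
    show "0 < e / (K + 1)"
      using \<open>0 < e\<close> \<open>0 \<le> K\<close> by simp
    fix x'
    assume near: "0 < norm (x' - x) \<and> norm (x' - x) < e / (K + 1)"
    define d where "d = x' - x"
    have "norm (\<phi> x' - \<phi> x - d \<bullet> G) \<le> K * (norm d)^2"
      using lower[of d] upper[of d] by (simp add: d_def)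
    then have "norm (\<phi> x' - \<phi> x - d \<bullet> G) / norm d \<le> K * norm d"
      using near by (simp add: d_def divide_le_eq power2_eq_square mult.assoc)
    also have "\<dots> \<le> K * (e / (K + 1))"
      using near \<open>0 \<le> K\<close> by (intro mult_left_mono) (auto simp: d_def)
    also have "\<dots> < e"
      using \<open>0 < e\<close> \<open>0 \<le> K\<close> by (simp add: field_simps)
    finally show "norm (\<phi> x' - \<phi> x - (x' - x) \<bullet> G) / norm (x' - x) < e"
      by (simp add: d_def)
  qed
qed

lemma gradient_unique:
  assumes "GDERIV \<phi> x :> g" "GDERIV \<phi> x :> G"
  shows "g = G"
proof -
  have "(\<lambda>h. h \<bullet> g) = (\<lambda>h. h \<bullet> G)"
    using assms unfolding gderiv_def by (rule has_derivative_unique)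
  then have "(g - G) \<bullet> (g - G) = 0"
    by (metis inner_diff_left inner_diff_right diff_self)
  then show ?thesis
    by simp
qed

lemma the_gradient_eqI: "GDERIV \<phi> x :> G \<Longrightarrow> (THE g. GDERIV \<phi> x :> g) = G"
  using gradient_unique by blast

lemma grad1_obj:
  fixes X :: "real^'p1^'n" and Z :: "real^'p2^'n"
  assumes "0 \<le> a" "0 \<le> b" "0 \<le> c"
  shows "grad1 (obj l a b c X Z y) (u, v) = transpose X *v fit_grad l a c y (X *v u) (Z *v v)"
proof -
  define G where "G = transpose X *v fit_grad l a c y (X *v u) (Z *v v)"
  obtain KX where KX: "\<And>d. norm (X *v d) \<le> norm d * KX"
    using bounded_linear.bounded[OF matrix_vector_mul_bounded_linear[of X]] by blast
  define C where "C = (1 / real CARD('n)) * ((a * curvature l + c) / 2)"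
  have "0 \<le> C"
    using assms curvature_nonneg[of l] by (simp add: C_def)
  have "GDERIV (\<lambda>w. obj l a b c X Z y (w, v)) u :> G"
  proof (rule has_gradient_of_quadratic_sandwich[where K = "C * KX^2"])
    fix d
    show "obj l a b c X Z y (u, v) + d \<bullet> G \<le> obj l a b c X Z y (u + d, v)"
      using obj_tangent_le[OF assms, of l X Z y u v "u + d" v] by (simp add: G_def inner_commute)
    have "(X *v d) \<bullet> (X *v d) \<le> KX^2 * (norm d)^2"
      unfolding dot_square_norm power_mult_distrib[symmetric] mult.commute[of KX]
      by (rule power_mono[OF KX norm_ge_zero])
    then have "C * ((X *v d) \<bullet> (X *v d)) \<le> C * KX^2 * (norm d)^2"
      using \<open>0 \<le> C\<close> by (simp add: mult_left_mono mult.assoc)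
    then show "obj l a b c X Z y (u + d, v) \<le> obj l a b c X Z y (u, v) + d \<bullet> G + C * KX^2 * (norm d)^2"
      using obj_le_tangent_quadratic[OF assms(1), of l b c X Z y u d v]
      by (simp add: G_def C_def inner_commute)
  next
    show "0 \<le> C * KX^2"
      using \<open>0 \<le> C\<close> by simp
  qed
  then show ?thesis
    unfolding grad1_def G_def by (simp add: the_gradient_eqI)
qed

lemma grad2_obj:
  assumes "0 \<le> a" "0 \<le> b" "0 \<le> c"
  shows "grad2 (obj l a b c X Z y) (u, v) = transpose Z *v fit_grad l b c y (Z *v v) (X *v u)"
proof -
  have "grad2 (obj l a b c X Z y) (u, v) = grad1 (obj l b a c Z X y) (v, u)"
    unfolding grad1_def grad2_def by (simp add: obj_swap[of l a b c X Z y])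
  then show ?thesis
    by (simp add: grad1_obj[OF assms(2,1,3)])
qed

section \<open>The largest eigenvalue of a symmetric matrix\<close>

definition eigenvalues :: "real^'m^'m \<Rightarrow> real set" where
  "eigenvalues M = {\<mu>. \<exists>v. v \<noteq> 0 \<and> M *v v = \<mu> *\<^sub>R v}"

lemma inner_symmetric_matrix:
  fixes M :: "real^'m^'m"
  assumes "transpose M = M"
  shows "u \<bullet> (M *v w) = (M *v u) \<bullet> w"
  by (metis assms dot_lmul_matrix transpose_matrix_vector)

lemma finite_eigenvalues_symmetric:
  fixes M :: "real^'m^'m"
  assumes sym: "transpose M = M"
  shows "finite (eigenvalues M)"
proof -
  define ev where "ev \<mu> = (SOME v. v \<noteq> 0 \<and> M *v v = \<mu> *\<^sub>R v)" for \<mu>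
  have ev: "ev \<mu> \<noteq> 0 \<and> M *v ev \<mu> = \<mu> *\<^sub>R ev \<mu>" if "\<mu> \<in> eigenvalues M" for \<mu>
    using that unfolding eigenvalues_def ev_def by (metis (mono_tags, lifting) mem_Collect_eq someI_ex)
  have inj: "inj_on ev (eigenvalues M)"
  proof (rule inj_onI)
    fix \<kappa> \<mu>
    assume "\<kappa> \<in> eigenvalues M" "\<mu> \<in> eigenvalues M" "ev \<kappa> = ev \<mu>"
    then have "(\<kappa> - \<mu>) *\<^sub>R ev \<kappa> = 0"
      using ev by (metis scaleR_left_diff_distrib diff_self)
    then show "\<kappa> = \<mu>"
      using ev[OF \<open>\<kappa> \<in> eigenvalues M\<close>] by simp
  qed
  have "pairwise orthogonal (ev ` eigenvalues M)"
  proof (rule pairwiseI)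
    fix u w
    assume "u \<in> ev ` eigenvalues M" "w \<in> ev ` eigenvalues M" "u \<noteq> w"
    then obtain \<kappa> \<mu> where "\<kappa> \<in> eigenvalues M" "\<mu> \<in> eigenvalues M" "u = ev \<kappa>" "w = ev \<mu>" "\<kappa> \<noteq> \<mu>"
      by blast
    then have "\<mu> * (u \<bullet> w) = \<kappa> * (u \<bullet> w)"
      using inner_symmetric_matrix[OF sym, of u w] ev by simp
    then show "orthogonal u w"
      using \<open>\<kappa> \<noteq> \<mu>\<close> by (simp add: orthogonal_def)
  qed
  moreover have "0 \<notin> ev ` eigenvalues M"
    using ev by auto
  ultimately have "finite (ev ` eigenvalues M)"
    using pairwise_orthogonal_independent independent_bound by blast
  then show ?thesis
    using inj finite_image_iff by blast
qed

lemma matrix_vector_mult_mat: "mat m *v x = m *\<^sub>R (x::real^'n)"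
  by (simp add: vec_eq_iff matrix_vector_mult_def mat_def if_distrib if_distribR cong del: if_weak_cong)

lemma linear_coeff_eq_0_if_nonneg:
  fixes p q :: real
  assumes "\<And>t. 0 \<le> p * t + q * t^2"
  shows "p = 0"
proof (rule ccontr)
  assume "p \<noteq> 0"
  define k where "k = \<bar>q\<bar> + 1"
  have "0 < k"
    by (simp add: k_def add_nonneg_pos)
  have "0 \<le> p * (- p / k) + q * (- p / k)^2"
    by (rule assms)
  also have "\<dots> \<le> - (p^2 / k) + \<bar>q\<bar> * p^2 / k^2"
    by (simp add: power2_eq_square abs_le_iff mult_right_mono divide_right_mono)
  also have "\<dots> = - (p^2 / k) + (k - 1) * p^2 / k^2"
    by (simp add: k_def)
  also have "\<dots> = - (p^2 / k^2)"
    using \<open>0 < k\<close> by (simp add: field_simps power2_eq_square)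
  also have "\<dots> < 0"
    using \<open>p \<noteq> 0\<close> \<open>0 < k\<close> by simp
  finally show False
    by simp
qed

lemma psd_form_eq_0_imp_kernel:
  fixes N :: "real^'m^'m"
  assumes sym: "transpose N = N" and psd: "\<And>w. 0 \<le> w \<bullet> (N *v w)" and "v \<bullet> (N *v v) = 0"
  shows "N *v v = 0"
proof -
  define r where "r = N *v v"
  have "0 \<le> (2 * (r \<bullet> r)) * t + (r \<bullet> (N *v r)) * t^2" for t
  proof -
    have "v \<bullet> (N *v r) = r \<bullet> r"
      using inner_symmetric_matrix[OF sym, of v r] by (simp add: r_def)
    then have "(v + t *\<^sub>R r) \<bullet> (N *v (v + t *\<^sub>R r)) = (2 * (r \<bullet> r)) * t + (r \<bullet> (N *v r)) * t^2"
      using \<open>v \<bullet> (N *v v) = 0\<close>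
      by (simp add: r_def matrix_vector_right_distrib matrix_vector_mult_scaleR inner_add_left
          inner_add_right inner_commute power2_eq_square algebra_simps)
    then show ?thesis
      using psd[of "v + t *\<^sub>R r"] by simp
  qed
  then have "2 * (r \<bullet> r) = 0"
    by (rule linear_coeff_eq_0_if_nonneg)
  then show ?thesis
    by (simp add: r_def)
qed

text \<open>The maximum \<open>\<mu>\<close> of the form on the unit sphere makes \<open>mat \<mu> - M\<close> positive semidefinite
  with the maximiser in its kernel, so \<open>\<mu>\<close> is an eigenvalue.\<close>

lemma quadratic_form_le_lambda_max:
  fixes M :: "real^'m^'m"
  assumes sym: "transpose M = M"
  shows "v \<bullet> (M *v v) \<le> lambda_max M * (v \<bullet> v)"
proof -
  define q where "q w = w \<bullet> (M *v w)" for w :: "real^'m"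
  have "continuous_on (sphere 0 1) q"
    unfolding q_def by (intro continuous_intros linear_continuous_on matrix_vector_mul_bounded_linear)
  moreover have "sphere (0::real^'m) 1 \<noteq> {}"
    using norm_axis_1 by (metis dist_0_norm empty_iff mem_sphere)
  ultimately obtain v0 where v0: "v0 \<in> sphere 0 1" "\<And>w. w \<in> sphere 0 1 \<Longrightarrow> q w \<le> q v0"
    using continuous_attains_sup[OF compact_sphere] by blast
  define \<mu> where "\<mu> = q v0"
  have bound: "q w \<le> \<mu> * (w \<bullet> w)" for w
  proof (cases "w = 0")
    case True
    then show ?thesis by (simp add: q_def)
  next
    case False
    then have "q ((1 / norm w) *\<^sub>R w) \<le> \<mu>"
      using v0 by (simp add: \<mu>_def)
    moreover have "q ((1 / norm w) *\<^sub>R w) = q w / (w \<bullet> w)"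
      by (simp add: q_def matrix_vector_mult_scaleR dot_square_norm power2_eq_square)
    ultimately show ?thesis
      using False by (simp add: divide_le_eq mult.commute)
  qed
  have "(mat \<mu> - M) *v v0 = 0"
  proof (rule psd_form_eq_0_imp_kernel)
    have mat: "(mat \<mu> - M) *v w = \<mu> *\<^sub>R w - M *v w" for w :: "real^'m"
      by (simp add: matrix_vector_mult_diff_rdistrib matrix_vector_mult_mat)
    show "transpose (mat \<mu> - M) = mat \<mu> - M"
      using sym by (simp add: vec_eq_iff transpose_def mat_def)
    show "0 \<le> w \<bullet> ((mat \<mu> - M) *v w)" for w
      using bound[of w] by (simp add: mat inner_diff_right q_def)
    have "v0 \<bullet> v0 = 1"
      using v0(1) by (simp add: dot_square_norm)
    then show "v0 \<bullet> ((mat \<mu> - M) *v v0) = 0"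
      unfolding mat by (simp add: inner_diff_right \<mu>_def q_def)
  qed
  then have "M *v v0 = \<mu> *\<^sub>R v0"
    by (simp add: matrix_vector_mult_diff_rdistrib matrix_vector_mult_mat)
  moreover have "v0 \<noteq> 0"
    using v0(1) by auto
  ultimately have "\<mu> \<le> lambda_max M"
    using finite_eigenvalues_symmetric[OF sym]
    unfolding lambda_max_def eigenvalues_def by (auto intro: Max_ge)
  then show ?thesis
    using bound[of v] mult_right_mono[of \<mu> "lambda_max M" "v \<bullet> v"] by (simp add: q_def)
qed

section \<open>The smoothness constant \<open>L\<^sub>f\<close>\<close>

lemma sum_UNIV_sum_type:
  "(\<Sum>k\<in>(UNIV::('a::finite + 'b::finite) set). f k) = (\<Sum>i\<in>UNIV. f (Inl i)) + (\<Sum>j\<in>UNIV. f (Inr j))"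
  using sum.Plus[of "UNIV::'a set" "UNIV::'b set" f] by (simp add: comp_def)

lemma transpose_Lmat: "transpose (Lmat l a b c X Z) = Lmat l a b c X Z"
  unfolding Lmat_def Let_def
  by (simp add: vec_eq_iff transpose_def matrix_matrix_mult_def mult.commute split: sum.splits)

definition block_inl :: "real^'p1 \<Rightarrow> real^('p1 + 'p2::finite)" where
  "block_inl d = (\<chi> k. case k of Inl i \<Rightarrow> d$i | Inr j \<Rightarrow> 0)"

definition block_inr :: "real^'p2 \<Rightarrow> real^('p1::finite + 'p2)" where
  "block_inr d = (\<chi> k. case k of Inl i \<Rightarrow> 0 | Inr j \<Rightarrow> d$j)"

lemma inner_block_inl [simp]: "block_inl d \<bullet> block_inl d = d \<bullet> d"
  by (simp add: block_inl_def inner_vec_def sum_UNIV_sum_type)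

lemma inner_block_inr [simp]: "block_inr d \<bullet> block_inr d = d \<bullet> d"
  by (simp add: block_inr_def inner_vec_def sum_UNIV_sum_type)

lemma quadratic_form_transpose_mult:
  fixes X :: "real^'p^'n"
  shows "d \<bullet> ((transpose X ** X) *v d) = (X *v d) \<bullet> (X *v d)"
  by (simp add: matrix_vector_mul_assoc[symmetric] dot_lmul_matrix[symmetric] inner_commute)

lemma curvature_scale: "(case l of Lin \<Rightarrow> a | Log \<Rightarrow> a / 4) = a * curvature l"
  by (cases l) (simp_all add: curvature_def)

lemma quadratic_form_Lmat_inl:
  fixes X :: "real^'p1^'n" and Z :: "real^'p2^'n" and d :: "real^'p1"
  shows "block_inl d \<bullet> (Lmat l a b c X Z *v block_inl d :: real^('p1 + 'p2))
    = (1 / real CARD('n)) * ((a * curvature l + c) * ((X *v d) \<bullet> (X *v d)))"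
proof -
  have "block_inl d \<bullet> (Lmat l a b c X Z *v block_inl d :: real^('p1 + 'p2))
      = (1 / real CARD('n)) * ((a * curvature l + c) * (d \<bullet> ((transpose X ** X) *v d)))"
    by (simp add: block_inl_def Lmat_def Let_def curvature_scale inner_vec_def matrix_vector_mult_def
        sum_UNIV_sum_type sum_distrib_left mult_ac)
  then show ?thesis
    by (simp add: quadratic_form_transpose_mult)
qed

lemma quadratic_form_Lmat_inr:
  fixes X :: "real^'p1^'n" and Z :: "real^'p2^'n" and d :: "real^'p2"
  shows "block_inr d \<bullet> (Lmat l a b c X Z *v block_inr d :: real^('p1 + 'p2))
    = (1 / real CARD('n)) * ((b * curvature l + c) * ((Z *v d) \<bullet> (Z *v d)))"
proof -
  have "block_inr d \<bullet> (Lmat l a b c X Z *v block_inr d :: real^('p1 + 'p2))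
      = (1 / real CARD('n)) * ((b * curvature l + c) * (d \<bullet> ((transpose Z ** Z) *v d)))"
    by (simp add: block_inr_def Lmat_def Let_def curvature_scale inner_vec_def matrix_vector_mult_def
        sum_UNIV_sum_type sum_distrib_left mult_ac)
  then show ?thesis
    by (simp add: quadratic_form_transpose_mult)
qed

lemma obj_le_tangent_Lf1:
  fixes X :: "real^'p1^'n" and Z :: "real^'p2^'n"
  assumes "0 \<le> a"
  shows "obj l a b c X Z y (u + d, v) \<le> obj l a b c X Z y (u, v)
      + (transpose X *v fit_grad l a c y (X *v u) (Z *v v)) \<bullet> d + Lf l a b c X Z / 2 * (d \<bullet> d)"
  using obj_le_tangent_quadratic[OF assms, of l b c X Z y u d v]
    quadratic_form_le_lambda_max[OF transpose_Lmat, of "block_inl d" l a b c X Z]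
  by (simp add: Lf_def quadratic_form_Lmat_inl)

lemma obj_le_tangent_Lf2:
  fixes X :: "real^'p1^'n" and Z :: "real^'p2^'n"
  assumes "0 \<le> b"
  shows "obj l a b c X Z y (u, v + d) \<le> obj l a b c X Z y (u, v)
      + (transpose Z *v fit_grad l b c y (Z *v v) (X *v u)) \<bullet> d + Lf l a b c X Z / 2 * (d \<bullet> d)"
  using obj_le_tangent_quadratic[OF assms, of l a c Z X y v d u]
    quadratic_form_le_lambda_max[OF transpose_Lmat, of "block_inr d" l a b c X Z]
  by (simp add: Lf_def quadratic_form_Lmat_inr obj_swap[of l a b c X Z y])

section \<open>Projection onto the sparse set\<close>

lemma proj_sparse_coord_eq:
  fixes u w :: "real^'p"
  assumes "u \<in> proj_sparse s w" and "(\<chi> k. if k = i then w$i else u$k) \<in> sparse_set s"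
  shows "u$i = w$i"
proof -
  define h where "h k = (w$k - u$k)^2" for k
  have "dist w u \<le> dist w (\<chi> k. if k = i then w$i else u$k)"
    using assms unfolding proj_sparse_def by blast
  then have "(\<Sum>k\<in>UNIV. h k) \<le> (\<Sum>k\<in>UNIV. h k - (if k = i then h k else 0))"
    unfolding dist_norm norm_le by (simp add: inner_vec_def h_def power2_eq_square if_distrib
        cong: if_cong)
  then have "h i \<le> 0"
    by (simp add: sum_subtractf)
  then show ?thesis
    by (simp add: h_def)
qed

lemma l0norm_update_le:
  fixes u :: "real^'p"
  shows "l0norm (\<chi> k. if k = i then x else u$k) \<le> Suc (l0norm u)"
    and "u$i \<noteq> 0 \<Longrightarrow> l0norm (\<chi> k. if k = i then x else u$k) \<le> l0norm u"
proof -
  have "l0norm (\<chi> k. if k = i then x else u$k) \<le> card (insert i {k. u$k \<noteq> 0})"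
    unfolding l0norm_def by (intro card_mono) auto
  also have "\<dots> \<le> Suc (l0norm u)"
    unfolding l0norm_def by (simp add: card_insert_if)
  finally show "l0norm (\<chi> k. if k = i then x else u$k) \<le> Suc (l0norm u)" .
  assume "u$i \<noteq> 0"
  then have "card {k. (\<chi> k. if k = i then x else u$k)$k \<noteq> 0} \<le> card {k. u$k \<noteq> 0}"
    by (intro card_mono) auto
  then show "l0norm (\<chi> k. if k = i then x else u$k) \<le> l0norm u"
    unfolding l0norm_def .
qed

lemma stationary_grad_eq_0_on_support:
  fixes u g :: "real^'p"
  assumes "u \<in> proj_sparse s (u - \<alpha> *\<^sub>R g)" "0 < \<alpha>" "u$i \<noteq> 0"
  shows "g$i = 0"
proof -
  have "l0norm u \<le> s"
    using assms(1) by (simp add: proj_sparse_def sparse_set_def)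
  then have "u$i = (u - \<alpha> *\<^sub>R g)$i"
    using l0norm_update_le(2)[OF assms(3), of "(u - \<alpha> *\<^sub>R g)$i"]
    by (intro proj_sparse_coord_eq[OF assms(1)]) (simp add: sparse_set_def)
  then show ?thesis
    using assms(2) by simp
qed

lemma stationary_grad_eq_0_if_not_full:
  fixes u g :: "real^'p"
  assumes "u \<in> proj_sparse s (u - \<alpha> *\<^sub>R g)" "0 < \<alpha>" "l0norm u < s"
  shows "g = 0"
proof -
  have "u$i = (u - \<alpha> *\<^sub>R g)$i" for i
    using assms(3) l0norm_update_le(1)[of i "(u - \<alpha> *\<^sub>R g)$i" u]
    by (intro proj_sparse_coord_eq[OF assms(1)]) (simp add: sparse_set_def)
  then show ?thesis
    using assms(2) by (simp add: vec_eq_iff)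
qed

lemma stationary_inner_eq_0:
  fixes u u' g :: "real^'p"
  assumes stat: "u \<in> proj_sparse s (u - \<alpha> *\<^sub>R g)" and "0 < \<alpha>"
    and "u' \<in> sparse_set s" and sub: "{i. u$i \<noteq> 0} \<subseteq> {i. u'$i \<noteq> 0}"
  shows "g \<bullet> (u' - u) = 0"
proof (cases "l0norm u < s")
  case True
  then show ?thesis
    using stationary_grad_eq_0_if_not_full[OF stat \<open>0 < \<alpha>\<close>] by simp
next
  case False
  then have "card {i. u'$i \<noteq> 0} \<le> card {i. u$i \<noteq> 0}"
    using \<open>u' \<in> sparse_set s\<close> by (simp add: sparse_set_def l0norm_def)
  then have supp: "{i. u$i \<noteq> 0} = {i. u'$i \<noteq> 0}"
    using card_seteq[OF _ sub] by simp
  have "g$i * (u'$i - u$i) = 0" for i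
    using stationary_grad_eq_0_on_support[OF stat \<open>0 < \<alpha>\<close>, of i] supp by (cases "u$i = 0") auto
  then have "(\<Sum>i\<in>UNIV. g$i * (u'$i - u$i)) = 0"
    by (intro sum.neutral) blast
  then show ?thesis
    by (simp add: inner_vec_def)
qed

lemma support_subset_near:
  fixes u :: "real^'p"
  obtains e where "0 < e" "\<And>u'. dist u' u < e \<Longrightarrow> {i. u$i \<noteq> 0} \<subseteq> {i. u'$i \<noteq> 0}"
proof
  define e where "e = Min (insert 1 {\<bar>u$i\<bar> | i. u$i \<noteq> 0})"
  have fin: "finite (insert 1 {\<bar>u$i\<bar> | i. u$i \<noteq> 0})"
    by simp
  show "0 < e"
    unfolding e_def using fin by (subst Min_gr_iff) auto
  fix u'
  assume near: "dist u' u < e"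
  show "{i. u$i \<noteq> 0} \<subseteq> {i. u'$i \<noteq> 0}"
  proof (intro subsetI CollectI notI)
    fix i
    assume "i \<in> {i. u$i \<noteq> 0}" "u'$i = 0"
    then have "e \<le> \<bar>u$i\<bar>"
      unfolding e_def using fin by (intro Min_le) auto
    also have "\<bar>u$i\<bar> = \<bar>(u' - u)$i\<bar>"
      using \<open>u'$i = 0\<close> by simp
    also have "\<dots> \<le> dist u' u"
      unfolding dist_norm by (rule component_le_norm_cart)
    finally show False
      using near by simp
  qed
qed

lemma local_min_if_stationary:
  fixes F :: "(real^'p1) \<times> (real^'p2) \<Rightarrow> real"
  assumes tangent: "\<And>u' v'. F (u, v) + g1 \<bullet> (u' - u) + g2 \<bullet> (v' - v) \<le> F (u', v')"
    and "0 < \<alpha>"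
    and stat1: "u \<in> proj_sparse s1 (u - \<alpha> *\<^sub>R g1)" and stat2: "v \<in> proj_sparse s2 (v - \<alpha> *\<^sub>R g2)"
  shows "local_min F s1 s2 (u, v)"
proof -
  obtain e1 where "0 < e1" and e1: "\<And>u'. dist u' u < e1 \<Longrightarrow> {i. u$i \<noteq> 0} \<subseteq> {i. u'$i \<noteq> 0}"
    using support_subset_near[of u] by blast
  obtain e2 where "0 < e2" and e2: "\<And>v'. dist v' v < e2 \<Longrightarrow> {i. v$i \<noteq> 0} \<subseteq> {i. v'$i \<noteq> 0}"
    using support_subset_near[of v] by blast
  have "F (u, v) \<le> F \<gamma>" if "feasible s1 s2 \<gamma>" "dist \<gamma> (u, v) < min e1 e2" for \<gamma>
  proof -
    obtain u' v' where \<gamma>: "\<gamma> = (u', v')"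
      by fastforce
    have "dist u' u < e1" "dist v' v < e2"
      using that(2) dist_fst_le[of \<gamma> "(u, v)"] dist_snd_le[of \<gamma> "(u, v)"] by (auto simp: \<gamma>)
    then have "g1 \<bullet> (u' - u) = 0" "g2 \<bullet> (v' - v) = 0"
      using that(1) \<gamma> stationary_inner_eq_0[OF stat1 \<open>0 < \<alpha>\<close>] stationary_inner_eq_0[OF stat2 \<open>0 < \<alpha>\<close>]
        e1 e2 by (auto simp: feasible_def)
    then show ?thesis
      using tangent[of u' v'] by (simp add: \<gamma>)
  qed
  moreover have "feasible s1 s2 (u, v)"
    using stat1 stat2 by (simp add: feasible_def proj_sparse_def)
  ultimately show ?thesis
    unfolding local_min_def using \<open>0 < e1\<close> \<open>0 < e2\<close> by (auto intro!: exI[of _ "min e1 e2"])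
qed

lemma global_min_if_stationary_not_full:
  fixes F :: "(real^'p1) \<times> (real^'p2) \<Rightarrow> real"
  assumes tangent: "\<And>u' v'. F (u, v) + g1 \<bullet> (u' - u) + g2 \<bullet> (v' - v) \<le> F (u', v')"
    and "0 < \<alpha>"
    and stat1: "u \<in> proj_sparse s1 (u - \<alpha> *\<^sub>R g1)" and stat2: "v \<in> proj_sparse s2 (v - \<alpha> *\<^sub>R g2)"
    and "l0norm u < s1" "l0norm v < s2"
  shows "global_min F s1 s2 (u, v)"
proof -
  have "g1 = 0" "g2 = 0"
    using stationary_grad_eq_0_if_not_full assms by blast+
  then have "F (u, v) \<le> F \<gamma>" for \<gamma>
    using tangent[of "fst \<gamma>" "snd \<gamma>"] by simp
  moreover have "feasible s1 s2 (u, v)"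
    using stat1 stat2 by (simp add: feasible_def proj_sparse_def)
  ultimately show ?thesis
    by (simp add: global_min_def)
qed

lemma mem_proj_sparse_if_descent:
  fixes u g :: "real^'p"
  assumes "u \<in> sparse_set s" and "0 < \<alpha>" and "\<alpha> * L < 1"
    and descent: "\<And>w. w \<in> sparse_set s \<Longrightarrow> 0 \<le> g \<bullet> (w - u) + L / 2 * ((w - u) \<bullet> (w - u))"
  shows "u \<in> proj_sparse s (u - \<alpha> *\<^sub>R g)"
  unfolding proj_sparse_def
proof (intro CollectI conjI ballI \<open>u \<in> sparse_set s\<close>)
  fix w :: "real^'p"
  assume "w \<in> sparse_set s"
  define d where "d = w - u"
  have "0 \<le> 2 * \<alpha> * (g \<bullet> d + L / 2 * (d \<bullet> d))"
    using descent[OF \<open>w \<in> sparse_set s\<close>] \<open>0 < \<alpha>\<close> by (simp add: d_def)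
  also have "\<dots> = 2 * \<alpha> * (g \<bullet> d) + (\<alpha> * L) * (d \<bullet> d)"
    by (simp add: algebra_simps)
  also have "\<dots> \<le> 2 * \<alpha> * (g \<bullet> d) + d \<bullet> d"
    using \<open>\<alpha> * L < 1\<close> mult_right_mono[of "\<alpha> * L" 1 "d \<bullet> d"] by simp
  finally have "(\<alpha> *\<^sub>R g) \<bullet> (\<alpha> *\<^sub>R g) \<le> (\<alpha> *\<^sub>R g + d) \<bullet> (\<alpha> *\<^sub>R g + d)"
    by (simp add: inner_add_left inner_add_right inner_commute algebra_simps)
  moreover have "u - \<alpha> *\<^sub>R g - u = - (\<alpha> *\<^sub>R g)" "u - \<alpha> *\<^sub>R g - w = - (\<alpha> *\<^sub>R g + d)"
    by (simp_all add: d_def algebra_simps)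
  ultimately show "dist (u - \<alpha> *\<^sub>R g) u \<le> dist (u - \<alpha> *\<^sub>R g) w"
    unfolding dist_norm norm_le by (simp only: inner_minus_left inner_minus_right minus_minus)
qed

lemma stationary_if_global_min:
  fixes F :: "(real^'p1) \<times> (real^'p2) \<Rightarrow> real"
  assumes "global_min F s1 s2 (u, v)"
    and upper1: "\<And>d. F (u + d, v) \<le> F (u, v) + g1 \<bullet> d + L / 2 * (d \<bullet> d)"
    and upper2: "\<And>d. F (u, v + d) \<le> F (u, v) + g2 \<bullet> d + L / 2 * (d \<bullet> d)"
    and "0 < \<alpha>" "\<alpha> * L < 1"
  shows "u \<in> proj_sparse s1 (u - \<alpha> *\<^sub>R g1) \<and> v \<in> proj_sparse s2 (v - \<alpha> *\<^sub>R g2)"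
proof
  have opt: "F (u, v) \<le> F (u', v')" if "u' \<in> sparse_set s1" "v' \<in> sparse_set s2" for u' v'
    using assms(1) that by (simp add: global_min_def feasible_def)
  have "u \<in> sparse_set s1" "v \<in> sparse_set s2"
    using assms(1) by (simp_all add: global_min_def feasible_def)
  show "u \<in> proj_sparse s1 (u - \<alpha> *\<^sub>R g1)"
  proof (rule mem_proj_sparse_if_descent[OF \<open>u \<in> sparse_set s1\<close> \<open>0 < \<alpha>\<close> \<open>\<alpha> * L < 1\<close>])
    show "0 \<le> g1 \<bullet> (w - u) + L / 2 * ((w - u) \<bullet> (w - u))" if "w \<in> sparse_set s1" for w
      using opt[OF that \<open>v \<in> sparse_set s2\<close>] upper1[of "w - u"] by simp
  qed
  show "v \<in> proj_sparse s2 (v - \<alpha> *\<^sub>R g2)"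
  proof (rule mem_proj_sparse_if_descent[OF \<open>v \<in> sparse_set s2\<close> \<open>0 < \<alpha>\<close> \<open>\<alpha> * L < 1\<close>])
    show "0 \<le> g2 \<bullet> (w - v) + L / 2 * ((w - v) \<bullet> (w - v))" if "w \<in> sparse_set s2" for w
      using opt[OF \<open>u \<in> sparse_set s1\<close> that] upper2[of "w - v"] by simp
  qed
qed

lemma alpha_stationary_obj_iff:
  fixes X :: "real^'p1^'n" and Z :: "real^'p2^'n"
  assumes "0 \<le> a" "0 \<le> b" "0 \<le> c"
  shows "alpha_stationary (obj l a b c X Z y) s1 s2 \<alpha> (u, v) \<longleftrightarrow>
    u \<in> proj_sparse s1 (u - \<alpha> *\<^sub>R (transpose X *v fit_grad l a c y (X *v u) (Z *v v))) \<and>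
    v \<in> proj_sparse s2 (v - \<alpha> *\<^sub>R (transpose Z *v fit_grad l b c y (Z *v v) (X *v u)))"
  by (simp add: alpha_stationary_def grad1_obj[OF assms] grad2_obj[OF assms])

theorem theorem3p4:
  fixes l :: loss and a b c :: real and s1 s2 :: nat
    and X :: "real^'p1^'n" and Z :: "real^'p2^'n" and y :: "real^'n"
  assumes "a > 0" and "b > 0" and "c > 0"
    and "1 \<le> s1" and "s1 \<le> CARD('p1)" and "1 \<le> s2" and "s2 \<le> CARD('p2)"
    and "l = Log \<Longrightarrow> \<forall>i. y $ i \<in> {0, 1}"
  shows "(\<forall>\<alpha> \<beta>. \<alpha> > 0 \<and> alpha_stationary (obj l a b c X Z y) s1 s2 \<alpha> \<beta> \<longrightarrow>
            local_min (obj l a b c X Z y) s1 s2 \<beta> \<and>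
            (l0norm (fst \<beta>) < s1 \<and> l0norm (snd \<beta>) < s2 \<longrightarrow>
               global_min (obj l a b c X Z y) s1 s2 \<beta>))
       \<and> (\<forall>\<beta>. global_min (obj l a b c X Z y) s1 s2 \<beta> \<longrightarrow>
            (\<forall>\<alpha>. 0 < \<alpha> \<and> \<alpha> * Lf l a b c X Z < 1 \<longrightarrow>
               alpha_stationary (obj l a b c X Z y) s1 s2 \<alpha> \<beta>))"
proof -
  have nonneg: "0 \<le> a" "0 \<le> b" "0 \<le> c"
    using assms(1-3) by simp_all
  note stationary_iff = alpha_stationary_obj_iff[OF nonneg, of l X Z y]
  note tangent = obj_tangent_le[OF nonneg, of l X Z y]
  have "local_min (obj l a b c X Z y) s1 s2 (u, v) \<and>
      (l0norm u < s1 \<and> l0norm v < s2 \<longrightarrow> global_min (obj l a b c X Z y) s1 s2 (u, v))"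
    if "0 < \<alpha>" "alpha_stationary (obj l a b c X Z y) s1 s2 \<alpha> (u, v)" for \<alpha> u v
    using that local_min_if_stationary[OF tangent] global_min_if_stationary_not_full[OF tangent]
    unfolding stationary_iff by blast
  moreover have "alpha_stationary (obj l a b c X Z y) s1 s2 \<alpha> (u, v)"
    if "global_min (obj l a b c X Z y) s1 s2 (u, v)" "0 < \<alpha>" "\<alpha> * Lf l a b c X Z < 1" for \<alpha> u v
    unfolding stationary_iff
    using stationary_if_global_min[OF that(1) obj_le_tangent_Lf1[OF nonneg(1)] obj_le_tangent_Lf2[OF nonneg(2)]
        that(2,3)] .
  ultimately show ?thesis
    by (metis prod.collapse)
qed

end
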